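(* Let $z\in\mathbb{R}^n$ satisfy $\dim\big(\Diamond_n\cap(z+\Diamond_n)\big)=n$. Then there exists $\epsilon>0$ such that $\mathcal{N}\big(\Diamond_n\cap(\lambda z+\Diamond_n)\big)=\mathcal{N}\big(\Diamond_n\cap(z+\Diamond_n)\big)$ for all $\lambda\in(1-\epsilon,1+\epsilon)$.
   Context: $\Diamond_n=\operatorname{conv}(\pm e_1,\ldots,\pm e_n)\subset\mathbb{R}^n$. For an $n$-dimensional polytope $P\subset\mathbb{R}^n$, its normal fan $\mathcal{N}(P)$ is the fan whose maximal cones are $(\mathbb{R}_+(P-v))^{\circ}$ for $v$ ranging over the vertices of $P$, where $\mathbb{R}_+X$ is the set of nonnegative linear combinations of elements of $X$ and $C^{\circ}=\{x:x\cdot y\ge0\text{ for all }y\in C\}$. *)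

theory Defs
  imports "HOL-Analysis.Analysis"
begin

definition cross_polytope :: "'a::euclidean_space set" where
  "cross_polytope = convex hull (Basis \<union> uminus ` Basis)"

definition dual_cone :: "'a::euclidean_space set \<Rightarrow> 'a set" where
  "dual_cone C = {x. \<forall>y\<in>C. x \<bullet> y \<ge> 0}"

definition normal_fan_max_cones :: "'a::euclidean_space set \<Rightarrow> 'a set set" where
  "normal_fan_max_cones P =
     {dual_cone (convex_cone hull ((\<lambda>x. x - v) ` P)) | v. v extreme_point_of P}"

definition normal_fan :: "'a::euclidean_space set \<Rightarrow> 'a set set" where
  "normal_fan P = {F. \<exists>C\<in>normal_fan_max_cones P. F face_of C}"

end

(*
  Write the intersection of the cross-polytope with its translate by t z as the polyhedron
  {x. s \<bullet> x \<le> 1 and s \<bullet> x \<le> 1 + t (s \<bullet> z) for all sign vectors s}, whose right-hand sides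
  depend affinely on t. For such a family the tangent cone at a vertex is cut out by the
  constraints active there, so the normal fan only depends on the active sets of the vertices.
  These sets do not change for t near 1 provided (i) every vertex can be moved with a velocity
  keeping its active constraints tight, and (ii) no family of constraints that is never
  simultaneously tight at t = 1 becomes so nearby, which holds by compactness. Full
  dimensionality of the intersection forces |z|_1 < 2, and then a velocity as in (i) can be
  written down coordinatewise from the sign patterns of v and v - z.
*)

theory Submission
  imports Defs
begin

lemma eventually_linear_less:
  fixes c d t0 :: real
  assumes "c < 0"
  shows "\<forall>\<^sub>F t in nhds t0. c + (t - t0) * d < 0"
proof -
  have "((\<lambda>t. c + (t - t0) * d) \<longlongrightarrow> c) (nhds t0)"
    using filterlim_ident[of "nhds t0"] by (auto intro!: tendsto_eq_intros)
  from order_tendstoD(2)[OF this assms] show ?thesis .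
qed

locale polyhedron_family =
  fixes K :: "'k set" and a :: "'k \<Rightarrow> 'a::euclidean_space" and b g :: "'k \<Rightarrow> real"
  assumes finite_K: "finite K"
begin

definition polyhedron_at :: "real \<Rightarrow> 'a set" where
  "polyhedron_at t = {x. \<forall>k\<in>K. a k \<bullet> x \<le> b k + t * g k}"

definition active :: "real \<Rightarrow> 'a \<Rightarrow> 'k set" where
  "active t x = {k\<in>K. a k \<bullet> x = b k + t * g k}"

definition spanning :: "'k set \<Rightarrow> bool" where
  "spanning T \<longleftrightarrow> (\<forall>d. (\<forall>k\<in>T. a k \<bullet> d = 0) \<longrightarrow> d = 0)"

definition inward_cone :: "'k set \<Rightarrow> 'a set" where
  "inward_cone T = {d. \<forall>k\<in>T. a k \<bullet> d \<le> 0}"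

definition vertex_active_sets :: "real \<Rightarrow> 'k set set" where
  "vertex_active_sets t = active t ` {x. x extreme_point_of polyhedron_at t}"

lemma active_subset: "active t x \<subseteq> K"
  by (auto simp: active_def)

lemma not_active_less:
  "x \<in> polyhedron_at t \<Longrightarrow> k \<in> K \<Longrightarrow> k \<notin> active t x \<Longrightarrow> a k \<bullet> x < b k + t * g k"
  by (force simp: active_def polyhedron_at_def order_le_less)

lemma spanning_mono: "spanning T \<Longrightarrow> T \<subseteq> T' \<Longrightarrow> spanning T'"
  unfolding spanning_def by blast

lemma eq_if_spanning_active:
  assumes "spanning T" "T \<subseteq> active t x" "T \<subseteq> active t y"
  shows "x = y"
proof -
  have "\<forall>k\<in>T. a k \<bullet> (x - y) = 0"
    using assms(2,3) unfolding active_def by (fastforce simp: inner_diff_right)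
  with assms(1) have "x - y = 0"
    unfolding spanning_def by blast
  then show ?thesis
    by simp
qed

lemma eventually_in_polyhedron_along:
  assumes x: "x \<in> polyhedron_at t" and d: "\<forall>k\<in>active t x. a k \<bullet> d \<le> 0"
  shows "\<forall>\<^sub>F \<tau> in at_right 0. x + \<tau> *\<^sub>R d \<in> polyhedron_at t"
proof -
  have "\<forall>\<^sub>F \<tau> in at_right 0. a k \<bullet> (x + \<tau> *\<^sub>R d) \<le> b k + t * g k" if k: "k \<in> K" for k
  proof (cases "k \<in> active t x")
    case True
    with d have "a k \<bullet> x = b k + t * g k" "a k \<bullet> d \<le> 0"
      by (auto simp: active_def)
    then show ?thesis
      by (intro eventually_mono[OF eventually_at_right_less])
        (simp add: inner_right_distrib mult_nonneg_nonpos)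
  next
    case False
    with k x have "a k \<bullet> x - (b k + t * g k) < 0"
      using not_active_less by simp
    from eventually_linear_less[OF this, of 0 "a k \<bullet> d"]
    have "\<forall>\<^sub>F \<tau> in at_right 0. a k \<bullet> x - (b k + t * g k) + (\<tau> - 0) * (a k \<bullet> d) < 0"
      unfolding eventually_at_filter by (rule eventually_mono) simp
    then show ?thesis
      by (rule eventually_mono) (simp add: inner_right_distrib)
  qed
  then have "\<forall>k\<in>K. \<forall>\<^sub>F \<tau> in at_right 0. a k \<bullet> (x + \<tau> *\<^sub>R d) \<le> b k + t * g k"
    by blast
  from eventually_ball_finite[OF finite_K this] show ?thesis
    unfolding polyhedron_at_def by simp
qed

lemma tangent_cone_polyhedron_at:
  assumes x: "x \<in> polyhedron_at t"
  shows "convex_cone hull ((\<lambda>y. y - x) ` polyhedron_at t) = inward_cone (active t x)"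
proof
  have "convex_cone (inward_cone (active t x))"
    by (auto simp: convex_cone_iff inward_cone_def inner_right_distrib
        add_nonpos_nonpos mult_nonneg_nonpos)
  moreover have "(\<lambda>y. y - x) ` polyhedron_at t \<subseteq> inward_cone (active t x)"
    unfolding inward_cone_def active_def polyhedron_at_def by (auto simp: inner_diff_right)
  ultimately show "convex_cone hull ((\<lambda>y. y - x) ` polyhedron_at t) \<subseteq> inward_cone (active t x)"
    by (rule hull_minimal[rotated])
next
  show "inward_cone (active t x) \<subseteq> convex_cone hull ((\<lambda>y. y - x) ` polyhedron_at t)"
  proof
    fix d assume "d \<in> inward_cone (active t x)"
    then have "\<forall>\<^sub>F \<tau> in at_right 0. 0 < \<tau> \<and> x + \<tau> *\<^sub>R d \<in> polyhedron_at t"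
      by (intro eventually_conj eventually_at_right_less eventually_in_polyhedron_along[OF x])
        (simp add: inward_cone_def)
    then obtain \<tau> :: real where "0 < \<tau>" "x + \<tau> *\<^sub>R d \<in> polyhedron_at t"
      using eventually_happens'[OF trivial_limit_at_right_real] by blast
    then have "\<tau> *\<^sub>R d \<in> convex_cone hull ((\<lambda>y. y - x) ` polyhedron_at t)"
      by (intro hull_inc) (auto intro: image_eqI[of _ _ "x + \<tau> *\<^sub>R d"])
    from convex_cone_hull_mul[OF this, of "1 / \<tau>"] \<open>0 < \<tau>\<close>
    show "d \<in> convex_cone hull ((\<lambda>y. y - x) ` polyhedron_at t)"
      by simp
  qed
qed

lemma spanning_active_if_extreme_point:
  assumes ext: "x extreme_point_of polyhedron_at t"
  shows "spanning (active t x)"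
  unfolding spanning_def
proof (intro allI impI)
  fix d assume d: "\<forall>k\<in>active t x. a k \<bullet> d = 0"
  have x: "x \<in> polyhedron_at t"
    using ext by (simp add: extreme_point_of_def)
  have "\<forall>\<^sub>F \<tau> in at_right 0. 0 < \<tau> \<and> x + \<tau> *\<^sub>R d \<in> polyhedron_at t \<and> x + \<tau> *\<^sub>R (- d) \<in> polyhedron_at t"
    using d by (intro eventually_conj eventually_at_right_less eventually_in_polyhedron_along[OF x]) auto
  then obtain \<tau> :: real
    where \<tau>: "0 < \<tau>" "x + \<tau> *\<^sub>R d \<in> polyhedron_at t" "x + \<tau> *\<^sub>R (- d) \<in> polyhedron_at t"
    using eventually_happens'[OF trivial_limit_at_right_real] by blast
  have "x = midpoint (x + \<tau> *\<^sub>R (- d)) (x + \<tau> *\<^sub>R d)"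
    by (simp add: midpoint_def algebra_simps flip: scaleR_add_left)
  with ext \<tau> have "x + \<tau> *\<^sub>R (- d) = x + \<tau> *\<^sub>R d"
    by (metis extreme_point_of_def midpoint_in_open_segment)
  then have "(2 * \<tau>) *\<^sub>R d = 0"
    by (simp add: algebra_simps flip: scaleR_add_left)
  with \<open>0 < \<tau>\<close> show "d = 0"
    by simp
qed

lemma active_subset_if_in_open_segment:
  assumes p: "p \<in> polyhedron_at t" and q: "q \<in> polyhedron_at t" and x: "x \<in> open_segment p q"
  shows "active t x \<subseteq> active t p \<inter> active t q"
proof
  fix k assume k: "k \<in> active t x"
  define B where "B = b k + t * g k"
  obtain u where u: "0 < u" "u < 1" "x = (1 - u) *\<^sub>R p + u *\<^sub>R q"
    using x by (auto simp: in_segment)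
  from k p q have le: "a k \<bullet> p \<le> B" "a k \<bullet> q \<le> B"
    and eq: "(1 - u) * (a k \<bullet> p) + u * (a k \<bullet> q) = B"
    using u(3) by (auto simp: B_def active_def polyhedron_at_def inner_add_right)
  from eq have "(1 - u) * (B - a k \<bullet> p) + u * (B - a k \<bullet> q) = 0"
    by (simp add: algebra_simps)
  moreover from le u(1,2) have "0 \<le> (1 - u) * (B - a k \<bullet> p)" "0 \<le> u * (B - a k \<bullet> q)"
    by simp_all
  ultimately have "(1 - u) * (B - a k \<bullet> p) = 0" "u * (B - a k \<bullet> q) = 0"
    by linarith+
  with u(1,2) k show "k \<in> active t p \<inter> active t q"
    by (simp add: B_def active_def)
qed

lemma extreme_point_iff_spanning:
  "x extreme_point_of polyhedron_at t \<longleftrightarrow> x \<in> polyhedron_at t \<and> spanning (active t x)"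
proof
  assume "x extreme_point_of polyhedron_at t"
  then show "x \<in> polyhedron_at t \<and> spanning (active t x)"
    by (simp add: extreme_point_of_def spanning_active_if_extreme_point)
next
  assume x: "x \<in> polyhedron_at t \<and> spanning (active t x)"
  have "x \<notin> open_segment p q" if "p \<in> polyhedron_at t" "q \<in> polyhedron_at t" for p q
  proof
    assume "x \<in> open_segment p q"
    with that have "p = q"
      using x active_subset_if_in_open_segment[OF that]
      by (intro eq_if_spanning_active[of "active t x" t]) auto
    with \<open>x \<in> open_segment p q\<close> show False
      by simp
  qed
  with x show "x extreme_point_of polyhedron_at t"
    by (simp add: extreme_point_of_def)
qed

lemma finite_extreme_points: "finite {x. x extreme_point_of polyhedron_at t}"
proof -
  have "inj_on (active t) {x. x extreme_point_of polyhedron_at t}"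
    by (rule inj_onI) (auto simp: extreme_point_iff_spanning intro: eq_if_spanning_active)
  moreover have "active t ` {x. x extreme_point_of polyhedron_at t} \<subseteq> Pow K"
    using active_subset by auto
  ultimately show ?thesis
    using finite_K finite_subset finite_imageD by blast
qed

lemma normal_fan_polyhedron_at:
  "normal_fan (polyhedron_at t) = {F. \<exists>T\<in>vertex_active_sets t. F face_of dual_cone (inward_cone T)}"
proof -
  have "normal_fan_max_cones (polyhedron_at t) =
      (\<lambda>v. dual_cone (convex_cone hull ((\<lambda>x. x - v) ` polyhedron_at t))) `
        {v. v extreme_point_of polyhedron_at t}"
    by (auto simp: normal_fan_max_cones_def)
  also have "\<dots> = (\<lambda>v. dual_cone (inward_cone (active t v))) ` {v. v extreme_point_of polyhedron_at t}"
    by (rule image_cong) (simp_all add: extreme_point_of_def tangent_cone_polyhedron_at)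
  also have "\<dots> = (\<lambda>T. dual_cone (inward_cone T)) ` vertex_active_sets t"
    by (simp add: vertex_active_sets_def image_image)
  finally have "normal_fan_max_cones (polyhedron_at t) = (\<lambda>T. dual_cone (inward_cone T)) ` vertex_active_sets t" .
  then show ?thesis
    unfolding normal_fan_def by auto
qed

lemma eventually_vertex_moves:
  assumes v: "v \<in> polyhedron_at t0" and w: "\<forall>k\<in>active t0 v. a k \<bullet> w = g k"
  shows "\<forall>\<^sub>F t in nhds t0. v + (t - t0) *\<^sub>R w \<in> polyhedron_at t \<and>
           active t (v + (t - t0) *\<^sub>R w) = active t0 v"
proof -
  have "\<forall>\<^sub>F t in nhds t0. a k \<bullet> (v + (t - t0) *\<^sub>R w) \<le> b k + t * g k \<and>
          (a k \<bullet> (v + (t - t0) *\<^sub>R w) = b k + t * g k \<longleftrightarrow> k \<in> active t0 v)"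
    if k: "k \<in> K" for k
  proof (cases "k \<in> active t0 v")
    case True
    with w have "a k \<bullet> v = b k + t0 * g k" "a k \<bullet> w = g k"
      by (auto simp: active_def)
    with True show ?thesis
      by (simp add: inner_right_distrib algebra_simps)
  next
    case False
    with k v have "a k \<bullet> v - (b k + t0 * g k) < 0"
      using not_active_less by simp
    from eventually_linear_less[OF this, of t0 "a k \<bullet> w - g k"] show ?thesis
      by (rule eventually_mono) (use False in \<open>auto simp: inner_right_distrib algebra_simps\<close>)
  qed
  then have "\<forall>k\<in>K. \<forall>\<^sub>F t in nhds t0. a k \<bullet> (v + (t - t0) *\<^sub>R w) \<le> b k + t * g k \<and>
          (a k \<bullet> (v + (t - t0) *\<^sub>R w) = b k + t * g k \<longleftrightarrow> k \<in> active t0 v)"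
    by blast
  from eventually_ball_finite[OF finite_K this] show ?thesis
    by (rule eventually_mono) (use active_subset[of t0 v] in \<open>auto simp: polyhedron_at_def active_def\<close>)
qed

lemma closed_active_superset_graph:
  assumes "T \<subseteq> K"
  shows "closed {(t, x). x \<in> polyhedron_at t \<and> T \<subseteq> active t x}"
proof -
  have "{(t, x). x \<in> polyhedron_at t \<and> T \<subseteq> active t x} =
      (\<Inter>k\<in>K. {p. a k \<bullet> snd p \<le> b k + fst p * g k}) \<inter>
      (\<Inter>k\<in>T. {p. a k \<bullet> snd p = b k + fst p * g k})"
    using assms by (auto simp: polyhedron_at_def active_def)
  moreover have "closed {p :: real \<times> 'a. a k \<bullet> snd p \<le> b k + fst p * g k}" for k
    by (intro closed_Collect_le continuous_intros)
  moreover have "closed {p :: real \<times> 'a. a k \<bullet> snd p = b k + fst p * g k}" for k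
    by (intro closed_Collect_eq continuous_intros)
  ultimately show ?thesis
    by (simp add: closed_Int closed_INT)
qed

text \<open>The parameters near t0 at which all of T can be tight form the projection of a compact set.\<close>
lemma eventually_no_new_active_set:
  assumes bounded: "bounded (\<Union>t. polyhedron_at t)"
    and "T \<subseteq> K" and T: "\<not> (\<exists>x\<in>polyhedron_at t0. T \<subseteq> active t0 x)"
  shows "\<forall>\<^sub>F t in nhds t0. \<not> (\<exists>x\<in>polyhedron_at t. T \<subseteq> active t x)"
proof -
  obtain R where R: "\<And>t x. x \<in> polyhedron_at t \<Longrightarrow> norm x \<le> R"
    using bounded unfolding bounded_iff by blast
  define S where "S = {(t, x). x \<in> polyhedron_at t \<and> T \<subseteq> active t x} \<inter> cball t0 1 \<times> cball 0 R"
  have "compact S"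
    unfolding S_def
    by (rule closed_Int_compact[OF closed_active_superset_graph[OF \<open>T \<subseteq> K\<close>]])
      (simp add: compact_Times)
  then have "closed (fst ` S)"
    by (intro compact_imp_closed compact_continuous_image continuous_on_fst continuous_on_id)
  moreover have "t0 \<notin> fst ` S"
    using T by (auto simp: S_def)
  ultimately have "\<forall>\<^sub>F t in nhds t0. t \<in> - fst ` S \<inter> ball t0 1"
    by (intro eventually_nhds_in_open open_Int open_Compl) auto
  then show ?thesis
  proof (rule eventually_mono)
    fix t assume t: "t \<in> - fst ` S \<inter> ball t0 1"
    show "\<not> (\<exists>x\<in>polyhedron_at t. T \<subseteq> active t x)"
    proof
      assume "\<exists>x\<in>polyhedron_at t. T \<subseteq> active t x"
      then obtain x where x: "x \<in> polyhedron_at t" "T \<subseteq> active t x"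
        by blast
      have "dist t0 t \<le> 1"
        using t by simp
      with R[OF x(1)] x have "(t, x) \<in> S"
        unfolding S_def by (simp add: dist_commute)
      then have "t \<in> fst ` S"
        by (rule rev_image_eqI) simp
      with t show False
        by blast
    qed
  qed
qed

lemma vertex_active_sets_eqI:
  assumes moves: "\<And>v. v extreme_point_of polyhedron_at s \<Longrightarrow> \<exists>x\<in>polyhedron_at t. active t x = active s v"
    and reflects: "\<And>x. x \<in> polyhedron_at t \<Longrightarrow> \<exists>y\<in>polyhedron_at s. active t x \<subseteq> active s y"
  shows "vertex_active_sets t = vertex_active_sets s"
proof
  show "vertex_active_sets s \<subseteq> vertex_active_sets t"
  proof
    fix T assume "T \<in> vertex_active_sets s"
    then obtain v where v: "v extreme_point_of polyhedron_at s" "T = active s v"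
      by (auto simp: vertex_active_sets_def)
    with moves obtain x where "x \<in> polyhedron_at t" "active t x = T"
      by blast
    with v show "T \<in> vertex_active_sets t"
      by (auto simp: vertex_active_sets_def extreme_point_iff_spanning)
  qed
next
  show "vertex_active_sets t \<subseteq> vertex_active_sets s"
  proof
    fix T assume "T \<in> vertex_active_sets t"
    then obtain x where x: "x \<in> polyhedron_at t" "spanning (active t x)" "T = active t x"
      by (auto simp: vertex_active_sets_def extreme_point_iff_spanning)
    then obtain y where y: "y \<in> polyhedron_at s" "active t x \<subseteq> active s y"
      using reflects by blast
    with x(2) have y_ext: "y extreme_point_of polyhedron_at s"
      by (simp add: extreme_point_iff_spanning spanning_mono)
    with moves obtain x' where x': "x' \<in> polyhedron_at t" "active t x' = active s y"
      by blast
    with x y have "x = x'"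
      by (intro eq_if_spanning_active[of "active t x" t]) auto
    with x(3) x' y_ext show "T \<in> vertex_active_sets s"
      by (auto simp: vertex_active_sets_def)
  qed
qed

lemma eventually_active_sets_reflected:
  assumes "bounded (\<Union>t. polyhedron_at t)"
  shows "\<forall>\<^sub>F t in nhds t0. \<forall>x\<in>polyhedron_at t. \<exists>y\<in>polyhedron_at t0. active t x \<subseteq> active t0 y"
proof -
  have "\<forall>T\<in>Pow K. \<forall>\<^sub>F t in nhds t0.
      (\<exists>x\<in>polyhedron_at t. T \<subseteq> active t x) \<longrightarrow> (\<exists>y\<in>polyhedron_at t0. T \<subseteq> active t0 y)"
  proof
    fix T assume "T \<in> Pow K"
    then show "\<forall>\<^sub>F t in nhds t0.
      (\<exists>x\<in>polyhedron_at t. T \<subseteq> active t x) \<longrightarrow> (\<exists>y\<in>polyhedron_at t0. T \<subseteq> active t0 y)"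
      using eventually_no_new_active_set[OF assms, of T t0]
      by (cases "\<exists>y\<in>polyhedron_at t0. T \<subseteq> active t0 y") (auto elim: eventually_mono)
  qed
  from eventually_ball_finite[OF _ this] have "\<forall>\<^sub>F t in nhds t0. \<forall>T\<in>Pow K.
      (\<exists>x\<in>polyhedron_at t. T \<subseteq> active t x) \<longrightarrow> (\<exists>y\<in>polyhedron_at t0. T \<subseteq> active t0 y)"
    using finite_K by simp
  then show ?thesis
    by (rule eventually_mono) (use active_subset in blast)
qed

lemma eventually_vertices_move:
  assumes "\<And>v. v extreme_point_of polyhedron_at t0 \<Longrightarrow> \<exists>w. \<forall>k\<in>active t0 v. a k \<bullet> w = g k"
  shows "\<forall>\<^sub>F t in nhds t0. \<forall>v\<in>{v. v extreme_point_of polyhedron_at t0}.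
    \<exists>x\<in>polyhedron_at t. active t x = active t0 v"
proof (intro eventually_ball_finite finite_extreme_points ballI)
  fix v assume v: "v \<in> {v. v extreme_point_of polyhedron_at t0}"
  with assms obtain w where "\<forall>k\<in>active t0 v. a k \<bullet> w = g k"
    by blast
  with v have "\<forall>\<^sub>F t in nhds t0.
      v + (t - t0) *\<^sub>R w \<in> polyhedron_at t \<and> active t (v + (t - t0) *\<^sub>R w) = active t0 v"
    by (intro eventually_vertex_moves) (auto simp: extreme_point_of_def)
  then show "\<forall>\<^sub>F t in nhds t0. \<exists>x\<in>polyhedron_at t. active t x = active t0 v"
    by (rule eventually_mono) blast
qed

lemma eventually_vertex_active_sets_eq:
  assumes "bounded (\<Union>t. polyhedron_at t)"
    and "\<And>v. v extreme_point_of polyhedron_at t0 \<Longrightarrow> \<exists>w. \<forall>k\<in>active t0 v. a k \<bullet> w = g k"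
  shows "\<forall>\<^sub>F t in nhds t0. vertex_active_sets t = vertex_active_sets t0"
  using eventually_vertices_move[OF assms(2)] eventually_active_sets_reflected[OF assms(1)]
  by (rule eventually_elim2) (auto intro!: vertex_active_sets_eqI)

end

definition l1_norm :: "'a::euclidean_space \<Rightarrow> real" where
  "l1_norm x = (\<Sum>i\<in>Basis. \<bar>x \<bullet> i\<bar>)"

definition sign_vectors :: "'a::euclidean_space set" where
  "sign_vectors = {s. \<forall>i\<in>Basis. s \<bullet> i = 1 \<or> s \<bullet> i = -1}"

lemma inner_sum_Basis_scaleR:
  fixes f :: "'a::euclidean_space \<Rightarrow> real"
  assumes "i \<in> Basis"
  shows "(\<Sum>j\<in>Basis. f j *\<^sub>R j) \<bullet> i = f i"
  using assms by (simp add: inner_sum_left inner_Basis if_distrib cong: if_cong)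

lemma l1_norm_nonneg: "0 \<le> l1_norm x"
  by (simp add: l1_norm_def sum_nonneg)

lemma l1_norm_eq_0_iff: "l1_norm x = 0 \<longleftrightarrow> x = 0"
  by (simp add: l1_norm_def sum_nonneg_eq_0_iff euclidean_all_zero_iff)

lemma l1_norm_minus: "l1_norm (- x) = l1_norm x"
  by (simp add: l1_norm_def)

lemma l1_norm_Basis: "b \<in> Basis \<Longrightarrow> l1_norm b = 1"
  by (simp add: l1_norm_def inner_Basis if_distrib cong: if_cong)

lemma finite_sign_vectors: "finite (sign_vectors :: 'a::euclidean_space set)"
proof -
  have "(sign_vectors :: 'a set) \<subseteq> (\<lambda>f. \<Sum>i\<in>Basis. f i *\<^sub>R i) ` (Basis \<rightarrow>\<^sub>E {-1, 1})"
  proof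
    fix s :: 'a assume s: "s \<in> sign_vectors"
    have "s = (\<Sum>i\<in>Basis. restrict (\<lambda>i. s \<bullet> i) Basis i *\<^sub>R i)"
      by (simp add: euclidean_representation)
    moreover have "restrict (\<lambda>i. s \<bullet> i) Basis \<in> Basis \<rightarrow>\<^sub>E {-1, 1}"
      using s by (auto simp: sign_vectors_def)
    ultimately show "s \<in> (\<lambda>f. \<Sum>i\<in>Basis. f i *\<^sub>R i) ` (Basis \<rightarrow>\<^sub>E {-1, 1})"
      by blast
  qed
  then show ?thesis
    by (rule finite_subset) (auto intro!: finite_imageI finite_PiE)
qed

lemma sign_vector_nonzero: "s \<in> (sign_vectors :: 'a::euclidean_space set) \<Longrightarrow> s \<noteq> 0"
  using nonempty_Basis by (force simp: sign_vectors_def)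

lemma sign_vector_inner_le_l1_norm: "s \<in> sign_vectors \<Longrightarrow> s \<bullet> x \<le> l1_norm x"
  unfolding l1_norm_def euclidean_inner[of s x]
  by (rule sum_mono) (auto simp: sign_vectors_def)

lemma ex_sign_vector_inner_eq_l1_norm: "\<exists>s\<in>sign_vectors. s \<bullet> x = l1_norm x"
proof
  define s :: 'a where "s = (\<Sum>i\<in>Basis. (if 0 \<le> x \<bullet> i then 1 else -1) *\<^sub>R i)"
  have s_i: "s \<bullet> i = (if 0 \<le> x \<bullet> i then 1 else -1)" if "i \<in> Basis" for i
    unfolding s_def using that by (rule inner_sum_Basis_scaleR)
  then show "s \<in> sign_vectors"
    by (simp add: sign_vectors_def)
  show "s \<bullet> x = l1_norm x"
    unfolding l1_norm_def euclidean_inner[of s x] by (rule sum.cong) (auto simp: s_i)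
qed

lemma l1_norm_le_iff: "l1_norm x \<le> c \<longleftrightarrow> (\<forall>s\<in>sign_vectors. s \<bullet> x \<le> c)"
  using sign_vector_inner_le_l1_norm ex_sign_vector_inner_eq_l1_norm by (metis order_trans)

lemma sign_vector_coordinates_if_inner_eq_l1_norm:
  assumes "s \<in> sign_vectors" "s \<bullet> x = l1_norm x" "i \<in> Basis"
  shows "(s \<bullet> i) * (x \<bullet> i) = \<bar>x \<bullet> i\<bar>"
proof -
  have "\<forall>j\<in>Basis. 0 \<le> \<bar>x \<bullet> j\<bar> - (s \<bullet> j) * (x \<bullet> j)"
    using assms(1) by (auto simp: sign_vectors_def)
  moreover have "(\<Sum>j\<in>Basis. \<bar>x \<bullet> j\<bar> - (s \<bullet> j) * (x \<bullet> j)) = 0"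
    using assms(2) unfolding l1_norm_def euclidean_inner[of s x] by (simp add: sum_subtractf)
  ultimately have "\<forall>j\<in>Basis. \<bar>x \<bullet> j\<bar> - (s \<bullet> j) * (x \<bullet> j) = 0"
    by (simp add: sum_nonneg_eq_0_iff)
  with assms(3) show ?thesis
    by simp
qed

lemma sign_vector_coordinate_eq_sgn:
  assumes "s \<in> sign_vectors" "s \<bullet> x = l1_norm x" "i \<in> Basis" "x \<bullet> i \<noteq> 0"
  shows "s \<bullet> i = sgn (x \<bullet> i)"
proof -
  have "s \<bullet> i = 1 \<or> s \<bullet> i = -1"
    using assms(1,3) by (simp add: sign_vectors_def)
  with sign_vector_coordinates_if_inner_eq_l1_norm[OF assms(1-3)] assms(4) show ?thesis
    by (auto simp: sgn_if abs_if split: if_splits)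
qed

lemma convex_l1_norm_ball: "convex {x::'a::euclidean_space. l1_norm x \<le> c}"
proof -
  have "{x::'a. l1_norm x \<le> c} = (\<Inter>s\<in>sign_vectors. {x. s \<bullet> x \<le> c})"
    by (auto simp: l1_norm_le_iff)
  then show ?thesis
    by (simp add: convex_INT convex_halfspace_le)
qed

lemma zero_in_cross_polytope: "0 \<in> cross_polytope"
proof -
  obtain b :: 'a where b: "b \<in> Basis"
    using nonempty_Basis by blast
  then have "b \<in> cross_polytope" "- b \<in> cross_polytope"
    by (auto simp: cross_polytope_def intro: hull_inc)
  from convexD[OF _ this, of "1/2" "1/2"] show ?thesis
    by (simp add: cross_polytope_def)
qed

lemma l1_norm_eq_1_in_cross_polytope:
  assumes "l1_norm x = 1"
  shows "x \<in> cross_polytope"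
proof -
  define u where "u i = (if 0 \<le> x \<bullet> i then i else - i)" for i :: 'a
  have "(\<Sum>i\<in>Basis. \<bar>x \<bullet> i\<bar> *\<^sub>R u i) = (\<Sum>i\<in>Basis. (x \<bullet> i) *\<^sub>R i)"
    by (rule sum.cong) (auto simp: u_def)
  then have "x = (\<Sum>i\<in>Basis. \<bar>x \<bullet> i\<bar> *\<^sub>R u i)"
    by (simp add: euclidean_representation)
  also have "\<dots> \<in> cross_polytope"
    using assms unfolding cross_polytope_def l1_norm_def
    by (intro convex_sum finite_Basis convex_convex_hull) (auto simp: u_def intro: hull_inc)
  finally show ?thesis .
qed

lemma cross_polytope_eq_l1_norm_ball: "cross_polytope = {x::'a::euclidean_space. l1_norm x \<le> 1}"
proof
  show "cross_polytope \<subseteq> {x::'a. l1_norm x \<le> 1}"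
    unfolding cross_polytope_def
    by (rule hull_minimal) (auto simp: l1_norm_Basis l1_norm_minus convex_l1_norm_ball)
next
  show "{x::'a. l1_norm x \<le> 1} \<subseteq> cross_polytope"
  proof
    fix x :: 'a assume x: "x \<in> {x. l1_norm x \<le> 1}"
    show "x \<in> cross_polytope"
    proof (cases "x = 0")
      case True
      then show ?thesis
        by (simp add: zero_in_cross_polytope)
    next
      case False
      then have l: "0 < l1_norm x"
        using l1_norm_nonneg[of x] l1_norm_eq_0_iff[of x] by simp
      then have "(1 / l1_norm x) *\<^sub>R x \<in> cross_polytope"
        by (intro l1_norm_eq_1_in_cross_polytope) (simp add: l1_norm_def abs_mult flip: sum_divide_distrib)
      from convexD[OF _ this zero_in_cross_polytope, of "l1_norm x" "1 - l1_norm x"] x l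
      show ?thesis
        by (simp add: cross_polytope_def)
    qed
  qed
qed

lemma translate_cross_polytope:
  "(\<lambda>x. c + x) ` (cross_polytope::'a::euclidean_space set) = {x. l1_norm (x - c) \<le> 1}"
proof -
  have "x \<in> (\<lambda>x. c + x) ` {y. l1_norm y \<le> 1} \<longleftrightarrow> l1_norm (x - c) \<le> 1" for x
    using image_eqI[of x "\<lambda>x. c + x" "x - c"] by auto
  then show ?thesis
    by (auto simp: cross_polytope_eq_l1_norm_ball)
qed

lemma uminus_sign_vector: "s \<in> sign_vectors \<Longrightarrow> - s \<in> sign_vectors"
  by (auto simp: sign_vectors_def)

text \<open>If l1_norm z \<ge> 2, the intersection lies in the hyperplane s \<bullet> x = 1 for the sign vector s of z.\<close>
lemma l1_norm_less_2_if_full_dim: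
  fixes z :: "'a::euclidean_space"
  assumes "aff_dim (cross_polytope \<inter> ((\<lambda>x. z + x) ` cross_polytope)) = int DIM('a)"
  shows "l1_norm z < 2"
proof (rule ccontr)
  assume "\<not> l1_norm z < 2"
  obtain s where s: "s \<in> sign_vectors" "s \<bullet> z = l1_norm z"
    using ex_sign_vector_inner_eq_l1_norm by blast
  have "cross_polytope \<inter> ((\<lambda>x. z + x) ` cross_polytope) \<subseteq> {x. s \<bullet> x = 1}"
  proof
    fix x assume "x \<in> cross_polytope \<inter> ((\<lambda>x. z + x) ` cross_polytope)"
    then have "s \<bullet> x \<le> 1" "- s \<bullet> (x - z) \<le> 1"
      using s(1) uminus_sign_vector[OF s(1)]
      by (auto simp: translate_cross_polytope cross_polytope_eq_l1_norm_ball l1_norm_le_iff)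
    with s(2) \<open>\<not> l1_norm z < 2\<close> show "x \<in> {x. s \<bullet> x = 1}"
      by (simp add: inner_diff_right)
  qed
  then have "aff_dim (cross_polytope \<inter> ((\<lambda>x. z + x) ` cross_polytope)) \<le> DIM('a) - 1"
    using aff_dim_subset aff_dim_hyperplane sign_vector_nonzero[OF s(1)] by metis
  with assms show False
    by simp
qed

lemma sum_if_mem_const:
  "finite A \<Longrightarrow> B \<subseteq> A \<Longrightarrow> (\<Sum>i\<in>A. if i \<in> B then c else 0) = (c::real) * card B"
  by (simp add: sum.If_cases Int_absorb1)

context
  fixes v z :: "'a::euclidean_space"
begin

definition same_sign_coords :: "'a set" where
  "same_sign_coords = {i\<in>Basis. 0 < (v \<bullet> i) * (v \<bullet> i - z \<bullet> i)}"

definition opposite_sign_coords :: "'a set" where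
  "opposite_sign_coords = {i\<in>Basis. (v \<bullet> i) * (v \<bullet> i - z \<bullet> i) < 0}"

definition common_mass :: real where
  "common_mass = (\<Sum>i\<in>Basis. if v \<bullet> i \<noteq> 0 \<and> v \<bullet> i = z \<bullet> i then \<bar>v \<bullet> i\<bar> else 0)"

definition shift_pairing :: real where
  "shift_pairing = (\<Sum>i\<in>Basis. sgn (v \<bullet> i - z \<bullet> i) * (z \<bullet> i))"

definition same_sign_speed :: real where
  "same_sign_speed = (shift_pairing - common_mass) / (2 * card same_sign_coords)"

text \<open>If there are no opposite-sign coordinates this is 0 by x / 0 = 0; harmless, as then
  common_mass + shift_pairing = 0 at every vertex considered.\<close>
definition opposite_sign_speed :: real where
  "opposite_sign_speed = - (common_mass + shift_pairing) / (2 * card opposite_sign_coords)"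

text \<open>On the facets through v, the conditions s \<bullet> w = 0 (for the facets of the first polytope)
  and s \<bullet> w = s \<bullet> z (for those of the translate) become two linear equations in the two speeds.\<close>
definition vertex_velocity :: 'a where
  "vertex_velocity = (\<Sum>i\<in>Basis.
     (if v \<bullet> i = 0 then 0
      else if v \<bullet> i = z \<bullet> i then z \<bullet> i
      else if i \<in> same_sign_coords then sgn (v \<bullet> i) * same_sign_speed
      else sgn (v \<bullet> i) * opposite_sign_speed) *\<^sub>R i)"

lemma vertex_velocity_coordinate:
  assumes "i \<in> Basis"
  shows "vertex_velocity \<bullet> i =
    (if v \<bullet> i = 0 then 0
     else if v \<bullet> i = z \<bullet> i then z \<bullet> i
     else if i \<in> same_sign_coords then sgn (v \<bullet> i) * same_sign_speed
     else sgn (v \<bullet> i) * opposite_sign_speed)"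
  unfolding vertex_velocity_def using assms by (rule inner_sum_Basis_scaleR)

lemma same_sign_coords_subset: "same_sign_coords \<subseteq> Basis"
  by (auto simp: same_sign_coords_def)

lemma opposite_sign_coords_subset: "opposite_sign_coords \<subseteq> Basis"
  by (auto simp: opposite_sign_coords_def)

lemma vertex_velocity_facet_coordinate:
  assumes s: "s \<in> sign_vectors" and tight: "s \<bullet> v = l1_norm v" and i: "i \<in> Basis"
  shows "(s \<bullet> i) * (vertex_velocity \<bullet> i) =
    (if v \<bullet> i \<noteq> 0 \<and> v \<bullet> i = z \<bullet> i then \<bar>v \<bullet> i\<bar> else 0)
    + (if i \<in> same_sign_coords then same_sign_speed else 0)
    + (if i \<in> opposite_sign_coords then opposite_sign_speed else 0)"
proof (cases "v \<bullet> i = 0")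
  case False
  then have s_i: "s \<bullet> i = sgn (v \<bullet> i)" and sgn_sq: "sgn (v \<bullet> i) * sgn (v \<bullet> i) = 1"
    using sign_vector_coordinate_eq_sgn[OF s tight i] by (simp_all add: sgn_if)
  consider "v \<bullet> i = z \<bullet> i" | "0 < (v \<bullet> i) * (v \<bullet> i - z \<bullet> i)" | "(v \<bullet> i) * (v \<bullet> i - z \<bullet> i) < 0"
    using False by (metis less_linear mult_eq_0_iff right_minus_eq)
  then show ?thesis
  proof cases
    case 1
    then have "vertex_velocity \<bullet> i = v \<bullet> i" "i \<notin> same_sign_coords" "i \<notin> opposite_sign_coords"
      using False i by (simp_all add: vertex_velocity_coordinate same_sign_coords_def opposite_sign_coords_def)
    with False 1 show ?thesis
      using sign_vector_coordinates_if_inner_eq_l1_norm[OF s tight i] by simp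
  next
    case 2
    then have "v \<bullet> i \<noteq> z \<bullet> i"
      by auto
    with 2 False i show ?thesis
      by (simp add: vertex_velocity_coordinate same_sign_coords_def opposite_sign_coords_def
          s_i sgn_sq mult.assoc[symmetric])
  next
    case 3
    then have "v \<bullet> i \<noteq> z \<bullet> i"
      by auto
    with 3 False i show ?thesis
      by (simp add: vertex_velocity_coordinate same_sign_coords_def opposite_sign_coords_def
          s_i sgn_sq mult.assoc[symmetric])
  qed
next
  case True
  then have "vertex_velocity \<bullet> i = 0" "i \<notin> same_sign_coords" "i \<notin> opposite_sign_coords"
    using i by (simp_all add: vertex_velocity_coordinate same_sign_coords_def opposite_sign_coords_def)
  with True show ?thesis
    by simp
qed

lemma inner_vertex_velocity_facet:
  assumes s: "s \<in> sign_vectors" and "s \<bullet> v = l1_norm v"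
  shows "s \<bullet> vertex_velocity = common_mass
    + same_sign_speed * card same_sign_coords + opposite_sign_speed * card opposite_sign_coords"
  using vertex_velocity_facet_coordinate[OF assms]
  unfolding euclidean_inner[of s vertex_velocity] common_mass_def
  by (simp add: sum.distrib sum_if_mem_const same_sign_coords_subset opposite_sign_coords_subset)

lemma vertex_velocity_translated_facet_coordinate:
  assumes s: "s \<in> sign_vectors" and tight: "s \<bullet> (v - z) = l1_norm (v - z)" and i: "i \<in> Basis"
  shows "(s \<bullet> i) * (vertex_velocity \<bullet> i - z \<bullet> i) =
    - (sgn (v \<bullet> i - z \<bullet> i) * (z \<bullet> i))
    + (if i \<in> same_sign_coords then same_sign_speed else 0)
    - (if i \<in> opposite_sign_coords then opposite_sign_speed else 0)"
proof (cases "v \<bullet> i = z \<bullet> i")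
  case True
  then have "vertex_velocity \<bullet> i = z \<bullet> i" "i \<notin> same_sign_coords" "i \<notin> opposite_sign_coords"
    using i by (simp_all add: vertex_velocity_coordinate same_sign_coords_def opposite_sign_coords_def)
  with True show ?thesis
    by simp
next
  case False
  with i have s_i: "s \<bullet> i = sgn (v \<bullet> i - z \<bullet> i)"
    using sign_vector_coordinate_eq_sgn[OF s tight i] by (simp add: inner_diff_left)
  consider "v \<bullet> i = 0" | "0 < (v \<bullet> i) * (v \<bullet> i - z \<bullet> i)" | "(v \<bullet> i) * (v \<bullet> i - z \<bullet> i) < 0"
    using False by (metis less_linear mult_eq_0_iff right_minus_eq)
  then show ?thesis
  proof cases
    case 1
    then have "vertex_velocity \<bullet> i = 0" "i \<notin> same_sign_coords" "i \<notin> opposite_sign_coords"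
      using i by (simp_all add: vertex_velocity_coordinate same_sign_coords_def opposite_sign_coords_def)
    then show ?thesis
      by (simp add: s_i algebra_simps)
  next
    case 2
    then have "v \<bullet> i \<noteq> 0" "sgn (v \<bullet> i - z \<bullet> i) * sgn (v \<bullet> i) = 1"
      by (auto simp: zero_less_mult_iff sgn_if)
    with 2 False i show ?thesis
      by (simp add: vertex_velocity_coordinate same_sign_coords_def opposite_sign_coords_def
          s_i right_diff_distrib mult.assoc[symmetric])
  next
    case 3
    then have "v \<bullet> i \<noteq> 0" "sgn (v \<bullet> i - z \<bullet> i) * sgn (v \<bullet> i) = -1"
      by (auto simp: mult_less_0_iff sgn_if)
    with 3 False i show ?thesis
      by (simp add: vertex_velocity_coordinate same_sign_coords_def opposite_sign_coords_def
          s_i right_diff_distrib mult.assoc[symmetric])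
  qed
qed

lemma inner_vertex_velocity_translated_facet:
  assumes s: "s \<in> sign_vectors" and "s \<bullet> (v - z) = l1_norm (v - z)"
  shows "s \<bullet> (vertex_velocity - z) = - shift_pairing
    + same_sign_speed * card same_sign_coords - opposite_sign_speed * card opposite_sign_coords"
  using vertex_velocity_translated_facet_coordinate[OF assms]
  unfolding euclidean_inner[of s "vertex_velocity - z"] shift_pairing_def
  by (simp add: inner_diff_left sum.distrib sum_subtractf sum_negf sum_if_mem_const
      same_sign_coords_subset opposite_sign_coords_subset)

lemma same_sign_coords_nonempty:
  assumes "l1_norm v = 1" "l1_norm (v - z) = 1" "l1_norm z < 2"
  shows "same_sign_coords \<noteq> {}"
proof
  assume "same_sign_coords = {}"
  then have "(v \<bullet> i) * (v \<bullet> i - z \<bullet> i) \<le> 0" if "i \<in> Basis" for i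
    using that by (force simp: same_sign_coords_def)
  then have "\<bar>z \<bullet> i\<bar> = \<bar>v \<bullet> i\<bar> + \<bar>v \<bullet> i - z \<bullet> i\<bar>" if "i \<in> Basis" for i
    using that by (fastforce simp: abs_if mult_le_0_iff)
  then have "l1_norm z = l1_norm v + l1_norm (v - z)"
    unfolding l1_norm_def by (simp add: sum.distrib[symmetric] inner_diff_left)
  with assms show False
    by simp
qed

lemma common_mass_add_shift_pairing:
  assumes "opposite_sign_coords = {}"
  shows "common_mass + shift_pairing = l1_norm v - l1_norm (v - z)"
proof -
  have "\<bar>v \<bullet> i\<bar> - \<bar>v \<bullet> i - z \<bullet> i\<bar> =
      (if v \<bullet> i \<noteq> 0 \<and> v \<bullet> i = z \<bullet> i then \<bar>v \<bullet> i\<bar> else 0) + sgn (v \<bullet> i - z \<bullet> i) * (z \<bullet> i)"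
    if i: "i \<in> Basis" for i
  proof -
    have "0 \<le> (v \<bullet> i) * (v \<bullet> i - z \<bullet> i)"
      using assms i by (force simp: opposite_sign_coords_def)
    then show ?thesis
      by (auto simp: sgn_if abs_if zero_le_mult_iff)
  qed
  then show ?thesis
    unfolding l1_norm_def common_mass_def shift_pairing_def
    by (simp add: sum_subtractf[symmetric] sum.distrib[symmetric] inner_diff_left)
qed

end

lemma vertex_velocity_keeps_facets_tight:
  fixes v z :: "'a::euclidean_space"
  assumes v: "l1_norm v = 1" and vz: "l1_norm (v - z) = 1" and z: "l1_norm z < 2"
  shows "\<forall>s\<in>sign_vectors. s \<bullet> v = 1 \<longrightarrow> s \<bullet> vertex_velocity v z = 0"
    and "\<forall>s\<in>sign_vectors. s \<bullet> v = 1 + s \<bullet> z \<longrightarrow> s \<bullet> vertex_velocity v z = s \<bullet> z"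
proof -
  have "0 < card (same_sign_coords v z)"
    using same_sign_coords_nonempty[OF v vz z]
    by (simp add: card_gt_0_iff finite_subset[OF same_sign_coords_subset])
  then have same_speed: "same_sign_speed v z * card (same_sign_coords v z) =
      (shift_pairing v z - common_mass v z) / 2"
    by (simp add: same_sign_speed_def)
  have opposite_speed: "opposite_sign_speed v z * card (opposite_sign_coords v z) =
      - (common_mass v z + shift_pairing v z) / 2"
    using common_mass_add_shift_pairing[of v z] v vz
    by (cases "opposite_sign_coords v z = {}")
      (simp_all add: opposite_sign_speed_def card_gt_0_iff finite_subset[OF opposite_sign_coords_subset])
  show "\<forall>s\<in>sign_vectors. s \<bullet> v = 1 \<longrightarrow> s \<bullet> vertex_velocity v z = 0"
    using v inner_vertex_velocity_facet[of _ v z] same_speed opposite_speed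
    by (simp add: field_simps)
  show "\<forall>s\<in>sign_vectors. s \<bullet> v = 1 + s \<bullet> z \<longrightarrow> s \<bullet> vertex_velocity v z = s \<bullet> z"
    using vz inner_vertex_velocity_translated_facet[of _ v z] same_speed opposite_speed
    by (simp add: inner_diff_right field_simps)
qed

lemma ex_vertex_velocity:
  fixes v z :: "'a::euclidean_space"
  assumes "v \<in> cross_polytope \<inter> ((\<lambda>x. z + x) ` cross_polytope)" and "l1_norm z < 2"
  shows "\<exists>w. (\<forall>s\<in>sign_vectors. s \<bullet> v = 1 \<longrightarrow> s \<bullet> w = 0) \<and>
             (\<forall>s\<in>sign_vectors. s \<bullet> v = 1 + s \<bullet> z \<longrightarrow> s \<bullet> w = s \<bullet> z)"
proof -
  have "l1_norm v \<le> 1" "l1_norm (v - z) \<le> 1"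
    using assms(1) unfolding translate_cross_polytope unfolding cross_polytope_eq_l1_norm_ball
    by auto
  then consider "l1_norm v < 1" | "l1_norm (v - z) < 1" | "l1_norm v = 1" "l1_norm (v - z) = 1"
    by linarith
  then show ?thesis
  proof cases
    case 1
    then show ?thesis
      using sign_vector_inner_le_l1_norm[of _ v] by (intro exI[of _ z]) force
  next
    case 2
    then have "\<forall>s\<in>sign_vectors. s \<bullet> v \<noteq> 1 + s \<bullet> z"
      using sign_vector_inner_le_l1_norm[of _ "v - z"] by (force simp: inner_diff_right)
    then show ?thesis
      by (intro exI[of _ 0]) auto
  next
    case 3
    with vertex_velocity_keeps_facets_tight[OF _ _ assms(2)] show ?thesis
      by blast
  qed
qed

lemma eventually_nhds_real_interval:
  fixes a :: real
  assumes "eventually P (nhds a)"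
  shows "\<exists>\<epsilon>>0. \<forall>t. a - \<epsilon> < t \<and> t < a + \<epsilon> \<longrightarrow> P t"
  using assms unfolding eventually_nhds_metric dist_real_def by (metis abs_diff_less_iff)

theorem lemma6p5:
  fixes z :: "'a::euclidean_space"
  assumes "aff_dim (cross_polytope \<inter> ((\<lambda>x. z + x) ` cross_polytope)) = int DIM('a)"
  shows "\<exists>\<epsilon>>0. \<forall>t::real. 1 - \<epsilon> < t \<and> t < 1 + \<epsilon> \<longrightarrow>
           normal_fan (cross_polytope \<inter> ((\<lambda>x. t *\<^sub>R z + x) ` cross_polytope))
         = normal_fan (cross_polytope \<inter> ((\<lambda>x. z + x) ` cross_polytope))"
proof -
  interpret P: polyhedron_family "sign_vectors \<times> {0, 1}" fst "\<lambda>_. 1" "\<lambda>(s, c). c * (s \<bullet> z)"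
    by unfold_locales (simp add: finite_sign_vectors)
  have P: "cross_polytope \<inter> ((\<lambda>x. t *\<^sub>R z + x) ` cross_polytope) = P.polyhedron_at t" for t
    unfolding translate_cross_polytope unfolding cross_polytope_eq_l1_norm_ball
    by (auto simp: P.polyhedron_at_def l1_norm_le_iff inner_diff_right algebra_simps)
  have "bounded (\<Union>t. P.polyhedron_at t)"
    using finite_imp_bounded_convex_hull[of "Basis \<union> uminus ` Basis"]
    by (rule bounded_subset) (auto simp: cross_polytope_def simp flip: P)
  moreover have "\<exists>w. \<forall>k\<in>P.active 1 v. fst k \<bullet> w = (case k of (s, c) \<Rightarrow> c * (s \<bullet> z))"
    if "v extreme_point_of P.polyhedron_at 1" for v
    using that P[of 1] ex_vertex_velocity[of v z, OF _ l1_norm_less_2_if_full_dim[OF assms]]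
    by (force simp: extreme_point_of_def P.active_def)
  ultimately have "\<forall>\<^sub>F t in nhds 1. P.vertex_active_sets t = P.vertex_active_sets 1"
    by (rule P.eventually_vertex_active_sets_eq)
  then have "\<forall>\<^sub>F t in nhds 1. normal_fan (cross_polytope \<inter> ((\<lambda>x. t *\<^sub>R z + x) ` cross_polytope))
      = normal_fan (cross_polytope \<inter> ((\<lambda>x. z + x) ` cross_polytope))"
    using P[of 1] by (elim eventually_mono) (simp add: P P.normal_fan_polyhedron_at)
  then show ?thesis
    by (rule eventually_nhds_real_interval)
qed

end
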